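(* Let $X$ be a complex Banach space and $1\leq p\leq\infty$. Then $(\Pi^{\mathcal{B}}_p(\mathbb{D},X),\pi^{\mathcal{B}}_p)$ is a Möbius-invariant space; that is, $\Pi^{\mathcal{B}}_p(\mathbb{D},X)\subseteq\mathcal{B}(\mathbb{D},X)$ and there is $c>0$ with $p_{\mathcal{B}}(f)\leq c\,\pi^{\mathcal{B}}_p(f)$ for all $f\in\Pi^{\mathcal{B}}_p(\mathbb{D},X)$, and for every $\phi\in\mathrm{Aut}(\mathbb{D})$ and $f\in\Pi^{\mathcal{B}}_p(\mathbb{D},X)$ we have $f\circ\phi\in\Pi^{\mathcal{B}}_p(\mathbb{D},X)$ and $\pi^{\mathcal{B}}_p(f\circ\phi)=\pi^{\mathcal{B}}_p(f)$.
   Context: $\mathbb{D}=\{z\in\mathbb{C}:|z|<1\}$; $\mathrm{Aut}(\mathbb{D})$ is the group of biholomorphic bijections of $\mathbb{D}$. For a complex Banach space $X$, $\mathcal{H}(\mathbb{D},X)$ is the space of holomorphic maps $\mathbb{D}\to X$; $p_{\mathcal{B}}(f)=\sup_{z\in\mathbb{D}}(1-|z|^2)\|f'(z)\|$; $\mathcal{B}(\mathbb{D},X)=\{f\in\mathcal{H}(\mathbb{D},X):p_{\mathcal{B}}(f)<\infty\}$; $\widehat{\mathcal{B}}(\mathbb{D})$ is the Banach space of holomorphic $g:\mathbb{D}\to\mathbb{C}$ with $g(0)=0$ and $p_{\mathcal{B}}(g)<\infty$, with norm $p_{\mathcal{B}}$ and closed unit ball $B_{\widehat{\mathcal{B}}(\mathbb{D})}$.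 For $1\leq p<\infty$, $f\in\mathcal{H}(\mathbb{D},X)$ is $p$-summing Bloch if there is $c\geq0$ with $\left(\sum_{i=1}^n|\lambda_i|^p\|f'(z_i)\|^p\right)^{1/p}\leq c\sup_{g\in B_{\widehat{\mathcal{B}}(\mathbb{D})}}\left(\sum_{i=1}^n|\lambda_i|^p|g'(z_i)|^p\right)^{1/p}$ for all $n\in\mathbb{N}$, $\lambda_i\in\mathbb{C}$, $z_i\in\mathbb{D}$; for $p=\infty$ the condition is $\max_i|\lambda_i|\|f'(z_i)\|\leq c\sup_{g\in B_{\widehat{\mathcal{B}}(\mathbb{D})}}\max_i|\lambda_i||g'(z_i)|$. The least such $c$ is $\pi^{\mathcal{B}}_p(f)$ (a seminorm), and $\Pi^{\mathcal{B}}_p(\mathbb{D},X)$ is the space of all $p$-summing Bloch maps $\mathbb{D}\to X$. *)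

theory Defs
  imports "HOL-Complex_Analysis.Complex_Analysis"
begin

text \<open>A complex Banach space is modelled as a real Banach space together with a
complex structure J (multiplication by i), compatible with the norm.\<close>

definition cscale :: "('a::real_vector \<Rightarrow> 'a) \<Rightarrow> complex \<Rightarrow> 'a \<Rightarrow> 'a" where
  "cscale J c x = Re c *\<^sub>R x + Im c *\<^sub>R J x"

definition complex_banach_structure :: "('a::banach \<Rightarrow> 'a) \<Rightarrow> bool" where
  "complex_banach_structure J \<longleftrightarrow> linear J \<and> (\<forall>x. J (J x) = - x) \<and>
     (\<forall>c x. norm (cscale J c x) = cmod c * norm x)"

abbreviation unit_disc :: "complex set" where
  "unit_disc \<equiv> ball 0 1"

definition holo_X :: "('a::banach \<Rightarrow> 'a) \<Rightarrow> (complex \<Rightarrow> 'a) \<Rightarrow> bool" where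
  "holo_X J f \<longleftrightarrow> (\<forall>z\<in>unit_disc. \<exists>v. (f has_derivative (\<lambda>h. cscale J h v)) (at z))"

definition cderiv_X :: "(complex \<Rightarrow> 'a::real_normed_vector) \<Rightarrow> complex \<Rightarrow> 'a" where
  "cderiv_X f z = frechet_derivative f (at z) 1"

definition bloch_X :: "('a::banach \<Rightarrow> 'a) \<Rightarrow> (complex \<Rightarrow> 'a) \<Rightarrow> bool" where
  "bloch_X J f \<longleftrightarrow> holo_X J f \<and>
     bdd_above ((\<lambda>z. (1 - (cmod z)\<^sup>2) * norm (cderiv_X f z)) ` unit_disc)"

definition p_B :: "(complex \<Rightarrow> 'a::real_normed_vector) \<Rightarrow> real" where
  "p_B f = (SUP z\<in>unit_disc. (1 - (cmod z)\<^sup>2) * norm (cderiv_X f z))"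

definition bloch_hat_ball :: "(complex \<Rightarrow> complex) set" where
  "bloch_hat_ball = {g. g holomorphic_on unit_disc \<and> g 0 = 0 \<and>
      (\<forall>z\<in>unit_disc. (1 - (cmod z)\<^sup>2) * cmod (deriv g z) \<le> 1)}"

definition psum_ineq :: "ereal \<Rightarrow> real \<Rightarrow> (complex \<Rightarrow> 'a::real_normed_vector) \<Rightarrow> bool" where
  "psum_ineq p c f \<longleftrightarrow>
    (if p = \<infinity> then
       (\<forall>n::nat. \<forall>lam::nat \<Rightarrow> complex. \<forall>zs::nat \<Rightarrow> complex.
          n \<ge> 1 \<longrightarrow> (\<forall>i<n. zs i \<in> unit_disc) \<longrightarrow>
          Max ((\<lambda>i. cmod (lam i) * norm (cderiv_X f (zs i))) ` {..<n})
            \<le> c * (SUP g\<in>bloch_hat_ball. Max ((\<lambda>i. cmod (lam i) * cmod (deriv g (zs i))) ` {..<n})))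
     else
       (\<forall>n::nat. \<forall>lam::nat \<Rightarrow> complex. \<forall>zs::nat \<Rightarrow> complex.
          (\<forall>i<n. zs i \<in> unit_disc) \<longrightarrow>
          (\<Sum>i<n. (cmod (lam i)) powr (real_of_ereal p) * (norm (cderiv_X f (zs i))) powr (real_of_ereal p))
              powr (1 / real_of_ereal p)
            \<le> c * (SUP g\<in>bloch_hat_ball.
                 (\<Sum>i<n. (cmod (lam i)) powr (real_of_ereal p) * (cmod (deriv g (zs i))) powr (real_of_ereal p))
                   powr (1 / real_of_ereal p))))"

definition p_summing_bloch :: "('a::banach \<Rightarrow> 'a) \<Rightarrow> ereal \<Rightarrow> (complex \<Rightarrow> 'a) \<Rightarrow> bool" where
  "p_summing_bloch J p f \<longleftrightarrow> holo_X J f \<and> (\<exists>c\<ge>0. psum_ineq p c f)"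

definition Pi_B :: "('a::banach \<Rightarrow> 'a) \<Rightarrow> ereal \<Rightarrow> (complex \<Rightarrow> 'a) set" where
  "Pi_B J p = {f. p_summing_bloch J p f}"

definition pi_B :: "ereal \<Rightarrow> (complex \<Rightarrow> 'a::real_normed_vector) \<Rightarrow> real" where
  "pi_B p f = Inf {c. c \<ge> 0 \<and> psum_ineq p c f}"

definition aut_disc :: "(complex \<Rightarrow> complex) \<Rightarrow> bool" where
  "aut_disc \<phi> \<longleftrightarrow> \<phi> holomorphic_on unit_disc \<and> bij_betw \<phi> unit_disc unit_disc \<and>
     (\<exists>\<psi>. \<psi> holomorphic_on unit_disc \<and> (\<forall>z\<in>unit_disc. \<psi> z \<in> unit_disc \<and> \<phi> (\<psi> z) = z \<and> \<psi> (\<phi> z) = z))"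

end

theory Submission
  imports Defs
begin

text \<open>By the Schwarz--Pick lemma, \<open>g \<mapsto> g \<circ> \<phi> - g (\<phi> 0)\<close> maps the unit ball of the
  normalized Bloch space into itself for every holomorphic self-map \<open>\<phi>\<close> of the disc. Since
  \<open>(f \<circ> \<phi>)' z = \<phi>' z \<cdot> f' (\<phi> z)\<close>, the \<open>p\<close>-summing inequality for \<open>f\<close> at the points \<open>\<phi> z\<^sub>i\<close> with
  weights \<open>\<lambda>\<^sub>i \<phi>' z\<^sub>i\<close> therefore yields the one for \<open>f \<circ> \<phi>\<close> at the \<open>z\<^sub>i\<close> with the same constant;
  applying this to an automorphism and to its inverse shows that both admit the same constants.
  Testing the inequality at a single point against \<open>|g' z| \<le> 1 / (1 - |z|\<^sup>2)\<close> bounds the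
  Bloch seminorm by \<open>\<pi>\<^sub>p\<close>.\<close>

lemma Moebius_function_has_field_derivative:
  assumes "cnj w * z \<noteq> 1"
  shows "(Moebius_function 0 w has_field_derivative (1 - cnj w * w) / (1 - cnj w * z)\<^sup>2) (at z)"
  unfolding Moebius_function_def using assms
  by (auto intro!: derivative_eq_intros simp: field_simps power2_eq_square)

lemma one_minus_cnj_mult_self: "1 - cnj a * a = complex_of_real (1 - (cmod a)\<^sup>2)"
  using complex_norm_square[of a] by (simp add: mult.commute)

lemma Schwarz_Pick_deriv:
  assumes holo: "\<phi> holomorphic_on unit_disc" and into: "\<phi> ` unit_disc \<subseteq> unit_disc"
    and a: "a \<in> unit_disc"
  shows "(1 - (cmod a)\<^sup>2) * cmod (deriv \<phi> a) \<le> 1 - (cmod (\<phi> a))\<^sup>2"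
proof -
  define b where "b = \<phi> a"
  define F where "F = Moebius_function 0 b \<circ> \<phi> \<circ> Moebius_function 0 (-a)"
  have b: "b \<in> unit_disc"
    using into a by (auto simp: b_def image_subset_iff)
  have pos: "1 - (cmod a)\<^sup>2 > 0" "1 - (cmod b)\<^sup>2 > 0"
    using a b by (simp_all add: abs_square_less_1)
  have Moebius_into: "Moebius_function 0 w ` unit_disc \<subseteq> unit_disc" if "w \<in> unit_disc" for w
    using Moebius_function_norm_lt_1 that by auto
  have "F holomorphic_on unit_disc"
    unfolding F_def using a b Moebius_into[of "-a"] into
    by (intro holomorphic_on_compose_gen[where t = unit_disc] Moebius_function_holomorphic holo) auto
  moreover have "F 0 = 0"
    by (simp add: F_def b_def Moebius_function_def)
  moreover have "norm (F z) < 1" if "norm z < 1" for z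
    using that a b Moebius_into[of "-a"] Moebius_into[of b] into by (auto simp: F_def image_subset_iff)
  ultimately have Schwarz: "norm (deriv F 0) \<le> 1"
    using Schwarz_Lemma(2)[of F 0] by simp
  have "(F has_field_derivative
          1 / (1 - cnj b * b) * deriv \<phi> a * (1 - cnj a * a)) (at 0)"
  proof -
    have "norm (cnj b * b) < 1"
      using b norm_mult_less[of "cnj b" 1 b 1] by simp
    then have "cnj b * b \<noteq> 1"
      by auto
    then have dMb: "(Moebius_function 0 b has_field_derivative 1 / (1 - cnj b * b)) (at (\<phi> a))"
      using Moebius_function_has_field_derivative[of b b] by (simp add: b_def power2_eq_square)
    have dMa: "(Moebius_function 0 (-a) has_field_derivative 1 - cnj a * a) (at 0)"
      using Moebius_function_has_field_derivative[of "-a" 0] by simp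
    have "Moebius_function 0 (-a) 0 = a"
      by (simp add: Moebius_function_def)
    then have "(Moebius_function 0 b \<circ> \<phi> has_field_derivative 1 / (1 - cnj b * b) * deriv \<phi> a)
        (at (Moebius_function 0 (-a) 0))"
      using DERIV_chain[OF dMb holomorphic_derivI[OF holo _ a]] by simp
    from DERIV_chain[OF this dMa] show ?thesis
      by (simp add: F_def)
  qed
  then have dF: "deriv F 0 = 1 / (1 - cnj b * b) * deriv \<phi> a * (1 - cnj a * a)"
    by (rule DERIV_imp_deriv)
  have "norm (deriv F 0) = (1 - (cmod a)\<^sup>2) * cmod (deriv \<phi> a) / (1 - (cmod b)\<^sup>2)"
    unfolding dF one_minus_cnj_mult_self norm_mult norm_divide norm_of_real
    using pos by simp
  with Schwarz pos show ?thesis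
    by (simp add: b_def divide_le_eq)
qed

lemma cscale_cscale:
  assumes "complex_banach_structure J"
  shows "cscale J h (cscale J a v) = cscale J (h * a) v"
proof -
  have "linear J" and "\<And>x. J (J x) = - x"
    using assms by (auto simp: complex_banach_structure_def)
  then have J_cscale: "J (cscale J a v) = Re a *\<^sub>R J v - Im a *\<^sub>R v"
    by (simp add: cscale_def linear_add linear_scale)
  show ?thesis
    unfolding cscale_def[of J h] J_cscale by (simp add: cscale_def algebra_simps)
qed

lemma norm_cscale:
  assumes "complex_banach_structure J"
  shows "norm (cscale J c x) = cmod c * norm x"
  using assms by (simp add: complex_banach_structure_def)

lemma cderiv_X_eqI:
  assumes "(f has_derivative (\<lambda>h. cscale J h v)) (at z)"
  shows "cderiv_X f z = v"
  unfolding cderiv_X_def frechet_derivative_at[OF assms, symmetric] by (simp add: cscale_def)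

lemma cderiv_X_cong:
  assumes "\<And>w. w \<in> unit_disc \<Longrightarrow> f w = g w" and "z \<in> unit_disc"
  shows "cderiv_X f z = cderiv_X g z"
proof -
  have "(f has_derivative D) (at z) \<longleftrightarrow> (g has_derivative D) (at z)" for D
    using has_derivative_transform_within_open[of f D z UNIV unit_disc g]
      has_derivative_transform_within_open[of g D z UNIV unit_disc f] assms by auto
  then show ?thesis
    by (simp add: cderiv_X_def frechet_derivative_def)
qed

lemma holo_X_has_derivative:
  assumes "holo_X J f" and "z \<in> unit_disc"
  shows "(f has_derivative (\<lambda>h. cscale J h (cderiv_X f z))) (at z)"
  using assms cderiv_X_eqI unfolding holo_X_def by metis

lemma has_derivative_compose_holomorphic:
  assumes "complex_banach_structure J"
    and f: "(f has_derivative (\<lambda>h. cscale J h v)) (at (\<phi> z))"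
    and \<phi>: "(\<phi> has_field_derivative d) (at z)"
  shows "((f \<circ> \<phi>) has_derivative (\<lambda>h. cscale J h (cscale J d v))) (at z)"
proof -
  have "((f \<circ> \<phi>) has_derivative (\<lambda>h. cscale J h v) \<circ> (*) d) (at z)"
    using diff_chain_at[OF \<phi>[unfolded has_field_derivative_def] f] .
  then show ?thesis
    by (simp add: o_def cscale_cscale[OF assms(1)] mult.commute)
qed

lemma
  assumes J: "complex_banach_structure J" and f: "holo_X J f"
    and holo: "\<phi> holomorphic_on unit_disc" and into: "\<phi> ` unit_disc \<subseteq> unit_disc"
  shows holo_X_compose: "holo_X J (f \<circ> \<phi>)"
    and norm_cderiv_X_compose: "z \<in> unit_disc \<Longrightarrow>
      norm (cderiv_X (f \<circ> \<phi>) z) = cmod (deriv \<phi> z) * norm (cderiv_X f (\<phi> z))"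
proof -
  have chain: "((f \<circ> \<phi>) has_derivative
      (\<lambda>h. cscale J h (cscale J (deriv \<phi> z) (cderiv_X f (\<phi> z))))) (at z)"
    if "z \<in> unit_disc" for z
    using that into
    by (intro has_derivative_compose_holomorphic[OF J] holo_X_has_derivative[OF f]
        holomorphic_derivI[OF holo]) (auto simp: image_subset_iff)
  then show "holo_X J (f \<circ> \<phi>)"
    unfolding holo_X_def by blast
  show "norm (cderiv_X (f \<circ> \<phi>) z) = cmod (deriv \<phi> z) * norm (cderiv_X f (\<phi> z))"
    if "z \<in> unit_disc"
    using cderiv_X_eqI[OF chain[OF that]] by (simp add: norm_cscale[OF J])
qed

lemma bloch_hat_ball_deriv_bound:
  assumes "g \<in> bloch_hat_ball" and "z \<in> unit_disc"
  shows "cmod (deriv g z) \<le> 1 / (1 - (cmod z)\<^sup>2)"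
proof -
  have "1 - (cmod z)\<^sup>2 > 0"
    using assms(2) by (simp add: abs_square_less_1)
  with assms show ?thesis
    by (simp add: bloch_hat_ball_def pos_le_divide_eq mult.commute)
qed

lemma zero_in_bloch_hat_ball: "(\<lambda>_. 0) \<in> bloch_hat_ball"
  by (simp add: bloch_hat_ball_def)

lemma
  assumes g: "g \<in> bloch_hat_ball"
    and holo: "\<phi> holomorphic_on unit_disc" and into: "\<phi> ` unit_disc \<subseteq> unit_disc"
  shows bloch_hat_ball_compose: "(\<lambda>z. g (\<phi> z) - g (\<phi> 0)) \<in> bloch_hat_ball"
    and deriv_bloch_hat_ball_compose: "z \<in> unit_disc \<Longrightarrow>
      deriv (\<lambda>z. g (\<phi> z) - g (\<phi> 0)) z = deriv g (\<phi> z) * deriv \<phi> z"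
proof -
  have hg: "g holomorphic_on unit_disc"
    using g by (simp add: bloch_hat_ball_def)
  have h: "(g \<circ> \<phi>) holomorphic_on unit_disc"
    by (rule holomorphic_on_compose_gen[OF holo hg into])
  show deriv: "deriv (\<lambda>z. g (\<phi> z) - g (\<phi> 0)) z = deriv g (\<phi> z) * deriv \<phi> z"
    if z: "z \<in> unit_disc" for z
  proof -
    have "\<phi> z \<in> unit_disc"
      using into z by blast
    then have "((g \<circ> \<phi>) has_field_derivative deriv g (\<phi> z) * deriv \<phi> z) (at z)"
      by (intro DERIV_chain holomorphic_derivI[OF hg] holomorphic_derivI[OF holo _ z]) auto
    then have "((\<lambda>z. g (\<phi> z) - g (\<phi> 0)) has_field_derivative deriv g (\<phi> z) * deriv \<phi> z) (at z)"
      by (auto intro: derivative_eq_intros simp: o_def)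
    then show ?thesis
      by (rule DERIV_imp_deriv)
  qed
  have "(1 - (cmod z)\<^sup>2) * cmod (deriv (\<lambda>z. g (\<phi> z) - g (\<phi> 0)) z) \<le> 1"
    if z: "z \<in> unit_disc" for z
  proof -
    have "(1 - (cmod z)\<^sup>2) * cmod (deriv (\<lambda>z. g (\<phi> z) - g (\<phi> 0)) z)
        = ((1 - (cmod z)\<^sup>2) * cmod (deriv \<phi> z)) * cmod (deriv g (\<phi> z))"
      by (simp add: deriv[OF z] norm_mult)
    also have "\<dots> \<le> (1 - (cmod (\<phi> z))\<^sup>2) * cmod (deriv g (\<phi> z))"
      by (intro mult_right_mono Schwarz_Pick_deriv[OF holo into z]) simp
    also have "\<dots> \<le> 1"
      using g into z by (auto simp: bloch_hat_ball_def image_subset_iff)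
    finally show ?thesis .
  qed
  with h show "(\<lambda>z. g (\<phi> z) - g (\<phi> 0)) \<in> bloch_hat_ball"
    by (auto simp: bloch_hat_ball_def o_def intro: holomorphic_intros)
qed

text \<open>The \<open>\<ell>\<^sup>p\<close>-norm of \<open>(v 0, \<dots>, v (n - 1))\<close> for nonnegative entries; for \<open>p = \<infinity>\<close> only
  \<open>n > 0\<close> is meaningful, since \<open>Max {}\<close> is unspecified.\<close>

definition lp_norm :: "ereal \<Rightarrow> nat \<Rightarrow> (nat \<Rightarrow> real) \<Rightarrow> real" where
  "lp_norm p n v =
    (if p = \<infinity> then Max (v ` {..<n})
     else (\<Sum>i<n. v i powr real_of_ereal p) powr (1 / real_of_ereal p))"

lemma lp_norm_cong: "(\<And>i. i < n \<Longrightarrow> v i = w i) \<Longrightarrow> lp_norm p n v = lp_norm p n w"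
  by (simp add: lp_norm_def)

lemma lp_norm_mono:
  assumes "\<And>i. i < n \<Longrightarrow> 0 \<le> v i" and "\<And>i. i < n \<Longrightarrow> v i \<le> w i"
    and "0 \<le> p" and "p = \<infinity> \<Longrightarrow> 0 < n"
  shows "lp_norm p n v \<le> lp_norm p n w"
proof (cases "p = \<infinity>")
  case True
  have "v i \<le> Max (w ` {..<n})" if "i < n" for i
    by (rule order_trans[OF assms(2)[OF that] Max_ge]) (use that in auto)
  with True assms(4) show ?thesis
    by (auto simp: lp_norm_def intro!: Max.boundedI)
next
  case False
  have "0 \<le> real_of_ereal p"
    using assms(3) by (simp add: real_of_ereal_pos)
  then show ?thesis
    using False assms(1,2)
    by (auto simp: lp_norm_def intro!: powr_mono2 sum_mono sum_nonneg)
qed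

lemma lp_norm_const_1:
  assumes "0 \<le> x" and "0 < p"
  shows "lp_norm p 1 (\<lambda>_. x) = x"
proof (cases "p = \<infinity>")
  case False
  with assms(2) have "real_of_ereal p \<noteq> 0"
    by (cases p) auto
  with assms(1) False show ?thesis
    by (simp add: lp_norm_def powr_powr)
qed (simp add: lp_norm_def lessThan_Suc)

text \<open>In the paper's notation this is the weak \<open>\<ell>\<^sup>p\<close>-norm of the family
  \<open>\<lambda>\<^sub>i \<gamma>\<^sub>z\<^sub>i\<close> of functionals \<open>\<gamma>\<^sub>z g = g'(z)\<close> on the normalized Bloch space.\<close>

definition bloch_weak_lp_norm ::
    "ereal \<Rightarrow> nat \<Rightarrow> (nat \<Rightarrow> complex) \<Rightarrow> (nat \<Rightarrow> complex) \<Rightarrow> real" where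
  "bloch_weak_lp_norm p n lam zs =
    (SUP g\<in>bloch_hat_ball. lp_norm p n (\<lambda>i. cmod (lam i) * cmod (deriv g (zs i))))"

lemma psum_ineq_iff:
  "psum_ineq p c f \<longleftrightarrow>
    (\<forall>n lam zs. (p = \<infinity> \<longrightarrow> 0 < n) \<longrightarrow> (\<forall>i<n. zs i \<in> unit_disc) \<longrightarrow>
      lp_norm p n (\<lambda>i. cmod (lam i) * norm (cderiv_X f (zs i)))
        \<le> c * bloch_weak_lp_norm p n lam zs)"
  by (auto simp: psum_ineq_def lp_norm_def bloch_weak_lp_norm_def powr_mult Suc_le_eq)

lemma lp_norm_bloch_hat_ball_le:
  assumes "g \<in> bloch_hat_ball" and "\<forall>i<n. zs i \<in> unit_disc"
    and "0 \<le> p" and "p = \<infinity> \<Longrightarrow> 0 < n"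
  shows "lp_norm p n (\<lambda>i. cmod (lam i) * cmod (deriv g (zs i)))
    \<le> lp_norm p n (\<lambda>i. cmod (lam i) * (1 / (1 - (cmod (zs i))\<^sup>2)))"
proof (rule lp_norm_mono)
  fix i assume "i < n"
  then show "cmod (lam i) * cmod (deriv g (zs i)) \<le> cmod (lam i) * (1 / (1 - (cmod (zs i))\<^sup>2))"
    using assms(1,2) by (intro mult_left_mono bloch_hat_ball_deriv_bound) auto
qed (use assms(3,4) in auto)

lemma
  assumes "\<forall>i<n. zs i \<in> unit_disc" and "0 \<le> p" and "p = \<infinity> \<Longrightarrow> 0 < n"
  shows bdd_above_lp_norm_bloch_hat_ball:
      "bdd_above ((\<lambda>g. lp_norm p n (\<lambda>i. cmod (lam i) * cmod (deriv g (zs i)))) ` bloch_hat_ball)"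
    and bloch_weak_lp_norm_le: "bloch_weak_lp_norm p n lam zs
      \<le> lp_norm p n (\<lambda>i. cmod (lam i) * (1 / (1 - (cmod (zs i))\<^sup>2)))"
proof -
  note bound = lp_norm_bloch_hat_ball_le[OF _ assms]
  show "bdd_above ((\<lambda>g. lp_norm p n (\<lambda>i. cmod (lam i) * cmod (deriv g (zs i)))) ` bloch_hat_ball)"
    using bound by (rule bdd_aboveI2)
  show "bloch_weak_lp_norm p n lam zs
      \<le> lp_norm p n (\<lambda>i. cmod (lam i) * (1 / (1 - (cmod (zs i))\<^sup>2)))"
    unfolding bloch_weak_lp_norm_def using bound zero_in_bloch_hat_ball by (intro cSUP_least) auto
qed

lemma bloch_weak_lp_norm_compose_le:
  assumes holo: "\<phi> holomorphic_on unit_disc" and into: "\<phi> ` unit_disc \<subseteq> unit_disc"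
    and zs: "\<forall>i<n. zs i \<in> unit_disc" and "0 \<le> p" and "p = \<infinity> \<Longrightarrow> 0 < n"
  shows "bloch_weak_lp_norm p n (\<lambda>i. lam i * deriv \<phi> (zs i)) (\<lambda>i. \<phi> (zs i))
    \<le> bloch_weak_lp_norm p n lam zs"
  unfolding bloch_weak_lp_norm_def
proof (rule cSUP_mono)
  show "bloch_hat_ball \<noteq> {}"
    using zero_in_bloch_hat_ball by blast
  show "bdd_above ((\<lambda>g. lp_norm p n (\<lambda>i. cmod (lam i) * cmod (deriv g (zs i)))) ` bloch_hat_ball)"
    by (rule bdd_above_lp_norm_bloch_hat_ball[OF zs assms(4,5)])
  fix g assume g: "g \<in> bloch_hat_ball"
  let ?h = "\<lambda>z. g (\<phi> z) - g (\<phi> 0)"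
  have "lp_norm p n (\<lambda>i. cmod (lam i * deriv \<phi> (zs i)) * cmod (deriv g (\<phi> (zs i))))
      = lp_norm p n (\<lambda>i. cmod (lam i) * cmod (deriv ?h (zs i)))"
    using zs by (intro lp_norm_cong) (simp add: deriv_bloch_hat_ball_compose[OF g holo into] norm_mult)
  with bloch_hat_ball_compose[OF g holo into]
  show "\<exists>h\<in>bloch_hat_ball.
      lp_norm p n (\<lambda>i. cmod (lam i * deriv \<phi> (zs i)) * cmod (deriv g (\<phi> (zs i))))
        \<le> lp_norm p n (\<lambda>i. cmod (lam i) * cmod (deriv h (zs i)))"
    by (intro bexI[of _ ?h]) simp_all
qed

lemma psum_ineqD:
  assumes "psum_ineq p c f" and "p = \<infinity> \<Longrightarrow> 0 < n" and "\<forall>i<n. zs i \<in> unit_disc"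
  shows "lp_norm p n (\<lambda>i. cmod (lam i) * norm (cderiv_X f (zs i)))
    \<le> c * bloch_weak_lp_norm p n lam zs"
  using assms unfolding psum_ineq_iff by blast

lemma psum_ineq_pointwise_bound:
  assumes "psum_ineq p c f" and "0 \<le> c" and "0 < p" and z: "z \<in> unit_disc"
  shows "(1 - (cmod z)\<^sup>2) * norm (cderiv_X f z) \<le> c"
proof -
  have pos: "1 - (cmod z)\<^sup>2 > 0"
    using z by (simp add: abs_square_less_1)
  have "norm (cderiv_X f z) = lp_norm p 1 (\<lambda>_. norm (cderiv_X f z))"
    using assms(3) by (simp only: lp_norm_const_1 norm_ge_zero)
  also have "\<dots> \<le> c * bloch_weak_lp_norm p 1 (\<lambda>_. 1) (\<lambda>_. z)"
    using psum_ineqD[OF assms(1), of 1 "\<lambda>_. z" "\<lambda>_. 1"] z by simp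
  also have "\<dots> \<le> c * lp_norm p 1 (\<lambda>_. cmod 1 * (1 / (1 - (cmod z)\<^sup>2)))"
    using bloch_weak_lp_norm_le[of 1 "\<lambda>_. z" p "\<lambda>_. 1"] assms(2,3) z
    by (intro mult_left_mono) auto
  also have "\<dots> = c / (1 - (cmod z)\<^sup>2)"
    using lp_norm_const_1[of "1 / (1 - (cmod z)\<^sup>2)" p] pos assms(3) by simp
  finally show ?thesis
    using pos by (simp add: pos_le_divide_eq mult.commute)
qed

lemma psum_ineq_cong:
  assumes "\<And>z. z \<in> unit_disc \<Longrightarrow> f z = g z"
  shows "psum_ineq p c f \<longleftrightarrow> psum_ineq p c g"
proof -
  have "lp_norm p n (\<lambda>i. cmod (lam i) * norm (cderiv_X f (zs i)))
      = lp_norm p n (\<lambda>i. cmod (lam i) * norm (cderiv_X g (zs i)))"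
    if "\<forall>i<n. zs i \<in> unit_disc" for n lam zs
    using that cderiv_X_cong[OF assms] by (intro lp_norm_cong) simp
  then show ?thesis
    unfolding psum_ineq_iff by simp
qed

lemma psum_ineq_compose:
  assumes J: "complex_banach_structure J" and f: "holo_X J f"
    and holo: "\<phi> holomorphic_on unit_disc" and into: "\<phi> ` unit_disc \<subseteq> unit_disc"
    and "0 \<le> c" and "0 \<le> p" and ps: "psum_ineq p c f"
  shows "psum_ineq p c (f \<circ> \<phi>)"
  unfolding psum_ineq_iff
proof (intro allI impI)
  fix n :: nat and lam zs :: "nat \<Rightarrow> complex"
  assume n: "p = \<infinity> \<longrightarrow> 0 < n" and zs: "\<forall>i<n. zs i \<in> unit_disc"
  have "lp_norm p n (\<lambda>i. cmod (lam i) * norm (cderiv_X (f \<circ> \<phi>) (zs i)))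
      = lp_norm p n (\<lambda>i. cmod (lam i * deriv \<phi> (zs i)) * norm (cderiv_X f (\<phi> (zs i))))"
    using zs by (intro lp_norm_cong) (simp add: norm_cderiv_X_compose[OF J f holo into] norm_mult)
  also have "\<dots> \<le> c * bloch_weak_lp_norm p n (\<lambda>i. lam i * deriv \<phi> (zs i)) (\<lambda>i. \<phi> (zs i))"
    using zs into n
    by (intro psum_ineqD[OF ps, where zs = "\<lambda>i. \<phi> (zs i)" and lam = "\<lambda>i. lam i * deriv \<phi> (zs i)"])
      (auto simp: image_subset_iff)
  also have "\<dots> \<le> c * bloch_weak_lp_norm p n lam zs"
    using n zs by (intro mult_left_mono bloch_weak_lp_norm_compose_le[OF holo into] assms(5,6)) auto
  finally show "lp_norm p n (\<lambda>i. cmod (lam i) * norm (cderiv_X (f \<circ> \<phi>) (zs i)))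
      \<le> c * bloch_weak_lp_norm p n lam zs" .
qed

lemma aut_discE:
  assumes "aut_disc \<phi>"
  obtains \<psi> where "\<phi> holomorphic_on unit_disc" "\<phi> ` unit_disc \<subseteq> unit_disc"
    "\<psi> holomorphic_on unit_disc" "\<psi> ` unit_disc \<subseteq> unit_disc"
    "\<And>z. z \<in> unit_disc \<Longrightarrow> \<phi> (\<psi> z) = z"
  using assms unfolding aut_disc_def bij_betw_def by blast

lemma psum_ineq_compose_aut_iff:
  assumes J: "complex_banach_structure J" and "aut_disc \<phi>" and f: "holo_X J f"
    and "0 \<le> c" and "0 \<le> p"
  shows "psum_ineq p c (f \<circ> \<phi>) \<longleftrightarrow> psum_ineq p c f"
proof -
  obtain \<psi> where \<phi>: "\<phi> holomorphic_on unit_disc" "\<phi> ` unit_disc \<subseteq> unit_disc"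
    and \<psi>: "\<psi> holomorphic_on unit_disc" "\<psi> ` unit_disc \<subseteq> unit_disc"
    and inverse: "\<And>z. z \<in> unit_disc \<Longrightarrow> \<phi> (\<psi> z) = z"
    using aut_discE[OF assms(2)] by blast
  show ?thesis
  proof
    assume "psum_ineq p c (f \<circ> \<phi>)"
    then have "psum_ineq p c (f \<circ> \<phi> \<circ> \<psi>)"
      by (rule psum_ineq_compose[OF J holo_X_compose[OF J f \<phi>] \<psi> assms(4,5)])
    then show "psum_ineq p c f"
      using psum_ineq_cong[of "f \<circ> \<phi> \<circ> \<psi>" f] inverse by simp
  qed (rule psum_ineq_compose[OF J f \<phi> assms(4,5)])
qed

lemma Pi_B_imp_bloch_X:
  assumes "f \<in> Pi_B J p" and "0 < p"
  shows "bloch_X J f"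
proof -
  obtain c where "holo_X J f" "0 \<le> c" "psum_ineq p c f"
    using assms(1) by (auto simp: Pi_B_def p_summing_bloch_def)
  with assms(2) show ?thesis
    unfolding bloch_X_def by (auto intro!: bdd_aboveI2 psum_ineq_pointwise_bound)
qed

lemma p_B_le_pi_B:
  assumes "f \<in> Pi_B J p" and "0 < p"
  shows "p_B f \<le> pi_B p f"
  unfolding p_B_def pi_B_def
proof (rule cSUP_least)
  show "unit_disc \<noteq> {}"
    by (metis centre_in_ball zero_less_one empty_iff)
  fix z assume "z \<in> unit_disc"
  then show "(1 - (cmod z)\<^sup>2) * norm (cderiv_X f z) \<le> Inf {c. 0 \<le> c \<and> psum_ineq p c f}"
    using assms psum_ineq_pointwise_bound
    by (auto simp: Pi_B_def p_summing_bloch_def intro!: cInf_greatest)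
qed

lemma
  assumes J: "complex_banach_structure J" and aut: "aut_disc \<phi>"
    and f: "f \<in> Pi_B J p" and "0 \<le> p"
  shows Pi_B_compose_aut: "f \<circ> \<phi> \<in> Pi_B J p"
    and pi_B_compose_aut: "pi_B p (f \<circ> \<phi>) = pi_B p f"
proof -
  have hf: "holo_X J f"
    using f by (simp add: Pi_B_def p_summing_bloch_def)
  have constants: "{c. 0 \<le> c \<and> psum_ineq p c (f \<circ> \<phi>)} = {c. 0 \<le> c \<and> psum_ineq p c f}"
    using psum_ineq_compose_aut_iff[OF J aut hf _ assms(4)] by blast
  then show "pi_B p (f \<circ> \<phi>) = pi_B p f"
    by (simp add: pi_B_def)
  obtain \<psi> where "\<phi> holomorphic_on unit_disc" "\<phi> ` unit_disc \<subseteq> unit_disc"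
    using aut_discE[OF aut] .
  then have "holo_X J (f \<circ> \<phi>)"
    by (rule holo_X_compose[OF J hf])
  with f constants show "f \<circ> \<phi> \<in> Pi_B J p"
    unfolding Pi_B_def p_summing_bloch_def by blast
qed

theorem proposition1p3:
  fixes J :: "'a::banach \<Rightarrow> 'a" and p :: ereal
  assumes "complex_banach_structure J"
    and "1 \<le> p"
  shows "(\<forall>f\<in>Pi_B J p. bloch_X J f)
       \<and> (\<exists>c>0. \<forall>f\<in>Pi_B J p. p_B f \<le> c * pi_B p f)
       \<and> (\<forall>\<phi>. aut_disc \<phi> \<longrightarrow> (\<forall>f\<in>Pi_B J p. f \<circ> \<phi> \<in> Pi_B J p \<and> pi_B p (f \<circ> \<phi>) = pi_B p f))"
proof -
  have "0 < p"
    using assms(2) by (cases p) auto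
  then show ?thesis
    using Pi_B_imp_bloch_X p_B_le_pi_B Pi_B_compose_aut[OF assms(1)] pi_B_compose_aut[OF assms(1)]
    by (intro conjI exI[of _ 1]) auto
qed

end
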